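(* For every integer $m\ge3$, $$K_m:=\int_0^\infty\left(\sqrt{1+t^m}-t^{m/2}\right)dt=\frac{B\!\left(\frac12,1+\frac1m\right)}{2\cos\left(\frac\pi m\right)}.$$
   Context: $B$ denotes the Euler beta function $B(z,w)=\Gamma(z)\Gamma(w)/\Gamma(z+w)$. *)

theory Defs
  imports "HOL-Analysis.Analysis"
begin

end

theory Submission
  imports Defs "HOL-Real_Asymp.Real_Asymp"
begin

(* For m >= 3 put z = 1/m.  The integral K_m of sqrt (1 + t^m) - t^(m/2) over [0, oo) is computed
   by the substitution  t^(m/2) = x / (2 sqrt (1 - x)),  x in (0,1).  With this choice
   sqrt (1 + t^m) = (2 - x) / (2 sqrt (1 - x)), so the integrand becomes simply sqrt (1 - x), and
   multiplying by the Jacobian and writing 2 - x = 1 + (1 - x) turns the integral into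
     2z 2^(-2z-1) (B(2z, 1/2 - z) + B(2z, 3/2 - z)).
   The file first evaluates this Beta expression in closed form (real reflection and duplication
   formulas for Gamma, plus the shift rule for Beta), then studies the substitution map
   (pulled-back integrand, derivative, Jacobian identity, boundary limits), then proves a general
   change-of-variables principle from (0,1) onto the half line for nonnegative integrands, and
   finally combines the three parts. *)

lemma Gamma_reflection_real:
  fixes x :: real
  shows "Gamma x * Gamma (1 - x) = pi / sin (pi * x)"
proof -
  have "complex_of_real (Gamma x * Gamma (1 - x))
        = Gamma (complex_of_real x) * Gamma (1 - complex_of_real x)"
    using Gamma_complex_of_real[of x] Gamma_complex_of_real[of "1 - x"] by simp
  also have "\<dots> = of_real pi / sin (of_real pi * of_real x)"
    by (rule Gamma_reflection_complex)
  also have "\<dots> = complex_of_real (pi / sin (pi * x))"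
    by (simp add: sin_of_real flip: of_real_mult)
  finally show ?thesis
    by (simp only: of_real_eq_iff)
qed

lemma Gamma_legendre_duplication_real:
  fixes z :: real
  assumes "z > 0"
  shows "Gamma z * Gamma (z + 1/2) = 2 powr (1 - 2*z) * sqrt pi * Gamma (2*z)"
proof -
  have not_pole: "complex_of_real z \<notin> \<int>\<^sub>\<le>\<^sub>0" "complex_of_real z + 1/2 \<notin> \<int>\<^sub>\<le>\<^sub>0"
    using assms by (auto elim!: nonpos_Ints_cases simp: complex_eq_iff)
  have "complex_of_real (Gamma z * Gamma (z + 1/2))
        = Gamma (complex_of_real z) * Gamma (complex_of_real z + 1/2)"
    using Gamma_complex_of_real[of "z + 1/2"] by (simp add: Gamma_complex_of_real)
  also have "\<dots> = exp ((1 - 2*complex_of_real z) * of_real (ln 2)) * of_real (sqrt pi)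
                   * Gamma (2*complex_of_real z)"
    by (rule Gamma_legendre_duplication[OF not_pole])
  also have "\<dots> = complex_of_real (2 powr (1 - 2*z) * sqrt pi * Gamma (2*z))"
    using Gamma_complex_of_real[of "2*z"]
    by (simp add: powr_def exp_of_real[symmetric] mult.commute)
  finally show ?thesis
    by (simp only: of_real_eq_iff)
qed

lemma two_powr_shift: "(2::real) powr (- s - 1) = 2 powr (1 - s) / 4"
proof -
  have "- s - 1 = (1 - s) - 2"
    by simp
  then show ?thesis
    by (simp only: powr_diff) simp
qed

(* Route: B(2z, 3/2 - z) is a multiple of B(2z, 1/2 - z); Gamma(2z) is removed by duplication and
   Gamma(1/2 - z) by reflection. *)
lemma Beta_closed_form:
  fixes z :: real
  assumes z: "0 < z" "z < 1/2"
  shows "2*z * 2 powr (-2*z - 1) * (Beta (2*z) (1/2 - z) + Beta (2*z) (3/2 - z))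
         = Beta (1/2) (1 + z) / (2 * cos (pi * z))"
proof -
  have cos_pos: "cos (pi * z) > 0"
    using z pi_gt_zero by (intro cos_gt_zero_pi) (auto simp: mult_less_cancel_left_pos intro: less_trans[of _ 0])
  have Gamma_pos: "Gamma (1/2 + z) > 0"
    using z by auto
  have shift: "Beta (2*z) (3/2 - z) = (1/2 - z) / (1/2 + z) * Beta (2*z) (1/2 - z)"
  proof -
    have "1/2 - z \<notin> \<int>\<^sub>\<le>\<^sub>0"
      using z by (auto elim!: nonpos_Ints_cases)
    from Beta_plus1_right[OF this, of "2*z"] show ?thesis
      using z by (simp add: field_simps)
  qed
  have reflection: "Gamma (1/2 - z) = sqrt pi * sqrt pi / (cos (pi * z) * Gamma (1/2 + z))"
  proof -
    have "Gamma (1/2 + z) * Gamma (1/2 - z) = pi / cos (pi * z)"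
      using Gamma_reflection_real[of "1/2 + z"]
      by (simp add: sin_add algebra_simps)
    with Gamma_pos cos_pos show ?thesis
      by (simp add: field_simps)
  qed
  have duplication: "2 powr (-2*z - 1) * Gamma (2*z) = Gamma z * Gamma (1/2 + z) / (4 * sqrt pi)"
  proof -
    have "2 powr (1 - 2*z) = 4 * 2 powr (-2*z - 1)"
      using two_powr_shift[of "2*z"] by simp
    with Gamma_legendre_duplication_real[OF z(1)] show ?thesis
      by (simp add: field_simps)
  qed
  have B_half: "Beta (1/2) (1 + z) = sqrt pi * (z * Gamma z) / ((1/2 + z) * Gamma (1/2 + z))"
  proof -
    have not_pole: "z \<notin> \<int>\<^sub>\<le>\<^sub>0" "1/2 + z \<notin> \<int>\<^sub>\<le>\<^sub>0"
      using z by (auto elim!: nonpos_Ints_cases)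
    have "Gamma (1 + z) = z * Gamma z"
      using Gamma_plus1[OF not_pole(1)] by (simp add: add_ac)
    moreover have "Gamma (3/2 + z) = (1/2 + z) * Gamma (1/2 + z)"
      using Gamma_plus1[OF not_pole(2)] by (simp add: add_ac)
    ultimately show ?thesis
      by (simp add: Beta_def Gamma_one_half_real)
  qed
  have Beta_sum: "Beta (2*z) (1/2 - z) + Beta (2*z) (3/2 - z)
                  = Gamma (2*z) * Gamma (1/2 - z) / Gamma (1/2 + z) / (1/2 + z)"
  proof -
    have "Beta (2*z) (1/2 - z) + Beta (2*z) (3/2 - z) = Beta (2*z) (1/2 - z) / (1/2 + z)"
      unfolding shift using z by (simp add: field_simps)
    then show ?thesis
      by (simp add: Beta_def add.commute)
  qed
  have "2*z * 2 powr (-2*z - 1) * (Beta (2*z) (1/2 - z) + Beta (2*z) (3/2 - z))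
        = 2*z * (2 powr (-2*z - 1) * Gamma (2*z)) * Gamma (1/2 - z) / ((1/2 + z) * Gamma (1/2 + z))"
    unfolding Beta_sum by (simp add: field_simps)
  also have "\<dots> = Beta (1/2) (1 + z) / (2 * cos (pi * z))"
  proof -
    have algebra: "2*z * (a * G / (4 * s)) * (s * s / (c * G)) / (w * G) = s * (z * a) / (w * G) / (2 * c)"
      if "s > 0" "c > 0" "G > 0" "w > 0" for a G s c w :: real
      using that by (simp add: field_simps)
    show ?thesis
      unfolding duplication reflection B_half by (rule algebra) (use cos_pos Gamma_pos z in auto)
  qed
  finally show ?thesis .
qed

(* The substitution t^(m/2) = subst_base x; it maps (0,1) increasingly onto (0, oo). *)
definition subst_base :: "real \<Rightarrow> real" where
  "subst_base x = x / (2 * sqrt (1 - x))"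

(* With u = subst_base x one has sqrt (1 + u^2) = (2 - x) / (2 sqrt (1 - x)), hence
   sqrt (1 + u^2) - u = sqrt (1 - x). *)
lemma sqrt_one_plus_subst_base_sq:
  assumes "0 \<le> x" "x < 1"
  shows "sqrt (1 + subst_base x ^ 2) - subst_base x = sqrt (1 - x)"
proof -
  have s: "sqrt (1 - x) > 0" "sqrt (1 - x) * sqrt (1 - x) = 1 - x"
    using assms by auto
  have sq: "sqrt (1 - x) ^ 2 = 1 - x"
    using assms by simp
  have "1 + subst_base x ^ 2 = 1 + x ^ 2 / (4 * (1 - x))"
    unfolding subst_base_def by (simp add: power_divide power_mult_distrib sq)
  also have "\<dots> = (2 - x) ^ 2 / (4 * (1 - x))"
    using assms by (simp add: field_simps power2_eq_square)
  also have "\<dots> = ((2 - x) / (2 * sqrt (1 - x))) ^ 2"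
    by (simp add: power_divide power_mult_distrib sq)
  finally have "sqrt (1 + subst_base x ^ 2) = (2 - x) / (2 * sqrt (1 - x))"
    using assms s by simp
  also have "\<dots> - subst_base x = (1 - x) / sqrt (1 - x)"
    using s unfolding subst_base_def by (simp add: field_simps del: real_sqrt_mult_self)
  also have "\<dots> = sqrt (1 - x)"
    using s by (simp add: field_simps power2_eq_square)
  finally show ?thesis .
qed

lemma subst_base_deriv:
  assumes "x < 1"
  shows "(subst_base has_real_derivative (2 - x) / (4 * (1 - x) * sqrt (1 - x))) (at x)"
proof -
  have s: "sqrt (1 - x) > 0" "sqrt (1 - x) * sqrt (1 - x) = 1 - x"
    using assms by auto
  have "((\<lambda>x. x / (2 * sqrt (1 - x))) has_real_derivative
          (1 * (2 * sqrt (1 - x)) - x * (2 * (inverse (sqrt (1 - x)) / 2 * - 1)))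
          / ((2 * sqrt (1 - x)) * (2 * sqrt (1 - x)))) (at x)"
    using s by (auto intro!: derivative_eq_intros)
  then show ?thesis
    unfolding subst_base_def by (rule DERIV_cong) (use s in \<open>simp add: field_simps\<close>)
qed

lemma subst_base_pos: "0 < x \<Longrightarrow> x < 1 \<Longrightarrow> subst_base x > 0"
  by (simp add: subst_base_def)

lemma integrand_at_subst:
  fixes m :: nat and z :: real
  assumes x: "0 < x" "x < 1" and mz: "real m * z = 1"
  defines "t \<equiv> subst_base x powr (2*z)"
  shows "sqrt (1 + t ^ m) - t powr (real m / 2) = sqrt (1 - x)"
proof -
  have pos: "subst_base x > 0"
    using x by (rule subst_base_pos)
  have exponent: "2*z * real m = 2"
    using mz by (simp add: mult_ac)
  have "t ^ m = t powr real m"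
    using pos by (simp add: t_def powr_realpow)
  also have "\<dots> = subst_base x powr 2"
    unfolding t_def powr_powr exponent ..
  also have "\<dots> = subst_base x ^ 2"
    using pos by simp
  finally have t_pow: "t ^ m = subst_base x ^ 2" .
  have "t powr (real m / 2) = subst_base x"
    using exponent pos by (simp add: t_def powr_powr)
  then show ?thesis
    using sqrt_one_plus_subst_base_sq x t_pow by simp
qed

lemma subst_deriv:
  assumes "0 < x" "x < 1"
  shows "((\<lambda>x. subst_base x powr (2*z)) has_real_derivative
           2*z * subst_base x powr (2*z - 1) * ((2 - x) / (4 * (1 - x) * sqrt (1 - x)))) (at x)"
  using DERIV_fun_powr[OF subst_base_deriv subst_base_pos, of x "2*z"] assms by simp

(* Integrand times Jacobian is a combination of two Beta kernels with parameters (2z, 1/2 - z)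
   and (2z, 3/2 - z); the second comes from writing 2 - x = 1 + (1 - x). *)
lemma subst_jacobian:
  fixes x z :: real
  assumes x: "0 < x" "x < 1"
  shows "sqrt (1 - x) * (2*z * subst_base x powr (2*z - 1) * ((2 - x) / (4 * (1 - x) * sqrt (1 - x))))
         = 2*z * 2 powr (-2*z - 1) * (x powr (2*z - 1) * (1 - x) powr ((1/2 - z) - 1)
                                      + x powr (2*z - 1) * (1 - x) powr ((3/2 - z) - 1))"
proof -
  define a where "a = 2*z - 1"
  define y where "y = 1 - x"
  have y: "y > 0" "sqrt y > 0"
    using x by (auto simp: y_def)
  have base: "subst_base x powr a = x powr a * 2 powr (-a) * y powr (-a/2)"
    using x y by (simp add: subst_base_def y_def powr_divide powr_mult powr_minus_divide
                              powr_half_sqrt [symmetric] powr_powr field_simps)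
  have e1: "y powr ((1/2 - z) - 1) = y powr (-a/2) / y"
  proof -
    have "(1/2 - z) - 1 = -a/2 - 1"
      by (simp add: a_def field_simps)
    then show ?thesis
      using y by (simp only: powr_diff powr_one)
  qed
  have e2: "y powr ((3/2 - z) - 1) = y powr (-a/2)"
    by (simp add: a_def field_simps)
  have e3: "2 powr (-2*z - 1) = 2 powr (-a) / 4"
    using two_powr_shift[of "2*z"] by (simp add: a_def)
  have two_minus: "2 - x = 1 + y"
    by (simp add: y_def)
  show ?thesis
    unfolding a_def [symmetric] y_def [symmetric] base e1 e2 e3 two_minus
    using y by (simp add: field_simps)
qed

lemma subst_base_tendsto_0: "(subst_base \<longlongrightarrow> 0) (at_right 0)"
  unfolding subst_base_def by real_asymp

lemma subst_base_at_top: "filterlim subst_base at_top (at_left 1)"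
  unfolding subst_base_def by real_asymp

lemma subst_tendsto_0:
  assumes "z > 0"
  shows "((\<lambda>x. subst_base x powr (2*z)) \<longlongrightarrow> 0) (at_right 0)"
proof (rule tendsto_zero_powrI[OF subst_base_tendsto_0 tendsto_const])
  show "\<forall>\<^sub>F x in at_right 0. 0 \<le> subst_base x"
    by (rule eventually_at_rightI[of 0 1]) (auto simp: subst_base_def)
qed (use assms in auto)

lemma subst_at_top:
  assumes "z > 0"
  shows "filterlim (\<lambda>x. subst_base x powr (2*z)) at_top (at_left 1)"
  using assms by (intro filterlim_compose[OF real_powr_at_top subst_base_at_top]) auto

lemma Beta_kernel_Ioo:
  fixes a b :: real
  assumes "a > 0" "b > 0"
  shows "set_integrable lborel {0<..<1} (\<lambda>t. t powr (a - 1) * (1 - t) powr (b - 1))"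
    and "((\<lambda>t. t powr (a - 1) * (1 - t) powr (b - 1)) has_integral Beta a b) {0<..<1}"
  using set_integrable_subset[OF integrable_Beta[OF assms], of "{0<..<1}"]
        has_integral_Beta_real[OF assms]
  by (auto simp: has_integral_Icc_iff_Ioo greaterThanLessThan_subseteq_atLeastAtMost_iff)

lemma has_integral_halfline_by_substitution:
  fixes f g g' k :: "real \<Rightarrow> real" and I :: real
  assumes deriv: "\<And>x. 0 < x \<Longrightarrow> x < 1 \<Longrightarrow> (g has_real_derivative g' x) (at x)"
    and cont_f: "\<And>x. 0 < x \<Longrightarrow> x < 1 \<Longrightarrow> isCont f (g x)"
    and cont_g': "\<And>x. 0 < x \<Longrightarrow> x < 1 \<Longrightarrow> isCont g' x"
    and f_nonneg: "\<And>x. 0 < x \<Longrightarrow> x < 1 \<Longrightarrow> 0 \<le> f (g x)"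
    and g'_nonneg: "\<And>x. 0 \<le> x \<Longrightarrow> x \<le> 1 \<Longrightarrow> 0 \<le> g' x"
    and lim_0: "(g \<longlongrightarrow> 0) (at_right 0)"
    and lim_1: "filterlim g at_top (at_left 1)"
    and pullback: "\<And>x. 0 < x \<Longrightarrow> x < 1 \<Longrightarrow> f (g x) * g' x = k x"
    and k_integrable: "set_integrable lborel {0<..<1} k"
    and k_integral: "(k has_integral I) {0<..<1}"
  shows "(f has_integral I) {0..}"
proof -
  have fgk: "set_integrable lborel {0<..<1} (\<lambda>x. f (g x) * g' x)"
    using k_integrable by (subst set_integrable_cong[OF refl refl, of _ _ k]) (auto simp: pullback)
  have lim_0': "((ereal \<circ> g \<circ> real_of_ereal) \<longlongrightarrow> ereal 0) (at_right (ereal 0))"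
    using lim_0 unfolding ereal_tendsto_simps1(2) ereal_tendsto_simps2(1) by simp
  have lim_1': "((ereal \<circ> g \<circ> real_of_ereal) \<longlongrightarrow> \<infinity>) (at_left (ereal 1))"
    using lim_1 unfolding ereal_tendsto_simps1(1) ereal_tendsto_simps2(2) by simp
  note subst = interval_integral_substitution_nonneg[of "ereal 0" "ereal 1" g g' f "ereal 0" \<infinity>,
                 simplified, OF deriv cont_f cont_g' f_nonneg g'_nonneg lim_0' lim_1' fgk]
  have f_integrable: "set_integrable lborel {0<..} f"
    by (rule subst(1))
  have "(LINT x:{0<..}|lborel. f x) = (LBINT x=ereal 0..ereal 1. f (g x) * g' x)"
    using subst(2) by (simp add: interval_lebesgue_integral_def)
  also have "\<dots> = (LINT x:{0<..<1}|lborel. k x)"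
    by (auto simp: interval_lebesgue_integral_def pullback intro!: set_lebesgue_integral_cong)
  also have "\<dots> = I"
    using set_borel_integral_eq_integral(2)[OF k_integrable] k_integral by (simp add: integral_unique)
  finally have "(f has_integral I) {0<..}"
    using set_borel_integral_eq_integral[OF f_integrable] by auto
  moreover have "negligible {x \<in> {0..} - {0<..}. f x \<noteq> 0}"
    by (rule negligible_subset[of "{0}"]) auto
  moreover have "negligible {x \<in> {0<..} - {0..}. f x \<noteq> 0}"
    by (rule negligible_subset[OF negligible_empty]) auto
  ultimately show ?thesis
    by (subst has_integral_spike_set_eq) auto
qed

lemma integral_as_Beta_sum:
  fixes m :: nat and z :: real
  assumes z: "0 < z" "z < 1/2" "real m * z = 1"
  shows "((\<lambda>t::real. sqrt (1 + t ^ m) - t powr (real m / 2)) has_integral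
           2*z * 2 powr (-2*z - 1) * (Beta (2*z) (1/2 - z) + Beta (2*z) (3/2 - z))) {0..}"
proof -
  define c where "c = 2*z * 2 powr (-2*z - 1)"
  define kernel where "kernel = (\<lambda>b x::real. x powr (2*z - 1) * (1 - x) powr (b - 1))"
  have kernel: "set_integrable lborel {0<..<1} (kernel b)" "(kernel b has_integral Beta (2*z) b) {0<..<1}"
    if "b > 0" for b
    using Beta_kernel_Ioo[of "2*z" b] z that by (simp_all add: kernel_def)
  show ?thesis
    unfolding c_def [symmetric]
  proof (rule has_integral_halfline_by_substitution)
    fix x :: real assume x: "0 < x" "x < 1"
    show "((\<lambda>x. subst_base x powr (2*z)) has_real_derivative
            2*z * subst_base x powr (2*z - 1) * ((2 - x) / (4 * (1 - x) * sqrt (1 - x)))) (at x)"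
      using x by (rule subst_deriv)
    show "isCont (\<lambda>t. sqrt (1 + t ^ m) - t powr (real m / 2)) (subst_base x powr (2*z))"
      using subst_base_pos[OF x] by (intro continuous_intros) auto
    show "isCont (\<lambda>x. 2*z * subst_base x powr (2*z - 1) * ((2 - x) / (4 * (1 - x) * sqrt (1 - x)))) x"
      using x subst_base_pos[OF x] unfolding subst_base_def by (intro continuous_intros) auto
    show "0 \<le> sqrt (1 + (subst_base x powr (2*z)) ^ m) - (subst_base x powr (2*z)) powr (real m / 2)"
      using integrand_at_subst[OF x z(3)] x by simp
    show "(sqrt (1 + (subst_base x powr (2*z)) ^ m) - (subst_base x powr (2*z)) powr (real m / 2))
          * (2*z * subst_base x powr (2*z - 1) * ((2 - x) / (4 * (1 - x) * sqrt (1 - x))))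
          = c * (kernel (1/2 - z) x + kernel (3/2 - z) x)"
      unfolding integrand_at_subst[OF x z(3)] subst_jacobian[OF x] c_def kernel_def ..
  next
    fix x :: real assume "0 \<le> x" "x \<le> 1"
    then show "0 \<le> 2*z * subst_base x powr (2*z - 1) * ((2 - x) / (4 * (1 - x) * sqrt (1 - x)))"
      using z by (auto intro!: mult_nonneg_nonneg divide_nonneg_nonneg)
  next
    show "set_integrable lborel {0<..<1} (\<lambda>x. c * (kernel (1/2 - z) x + kernel (3/2 - z) x))"
      using z by (intro set_integrable_mult_right set_integral_add kernel) auto
    show "((\<lambda>x. c * (kernel (1/2 - z) x + kernel (3/2 - z) x)) has_integral
            c * (Beta (2*z) (1/2 - z) + Beta (2*z) (3/2 - z))) {0<..<1}"
      using z by (intro has_integral_mult_right has_integral_add kernel) auto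
  qed (use subst_tendsto_0 subst_at_top z in auto)
qed

theorem lemmaA1:
  fixes m :: nat
  assumes "m \<ge> 3"
  shows "((\<lambda>t::real. sqrt (1 + t ^ m) - t powr (real m / 2)) has_integral
           (Beta (1/2) (1 + 1 / real m) / (2 * cos (pi / real m)))) {0..}"
proof -
  define z where "z = 1 / real m"
  have z: "0 < z" "z < 1/2" "real m * z = 1"
    using assms by (auto simp: z_def field_simps)
  show ?thesis
    using integral_as_Beta_sum[OF z] Beta_closed_form[OF z(1,2)] by (simp add: z_def)
qed

end
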